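(* Let $\mathcal{H}$ be a Hilbert space with a unit vector $\xi$ and expectation functional $\phi(T)=\langle T\xi,\xi\rangle$. Let $P,Q$ be Boolean independent orthogonal projections on $(\mathcal{H},\xi)$ with $\phi(P)=1-p$ and $\phi(Q)=1-q$, where $p,q\in[0,1]$. Then $\phi(P\vee Q)=1-r$, where $r\in[0,1]$ is determined by $$r^{-1}-1=(p^{-1}-1)+(q^{-1}-1).$$
   Context: Noncommutative random variables are self-adjoint operators on $\mathcal{H}$, with distribution taken with respect to $\phi$. Two families of bounded self-adjoint operators are Boolean independent with respect to $\phi$ if, denoting by $\mathcal{A}$ and $\mathcal{B}$ the (non-unital) $*$-algebras they generate, one has $\phi(c_1c_2\cdots c_n)=\phi(c_1)\phi(c_2)\cdots\phi(c_n)$ whenever each $c_i$ lies in $\mathcal{A}$ or in $\mathcal{B}$ and consecutive $c_i$ alternate between $\mathcal{A}$ and $\mathcal{B}$. For projections $P,Q$, $P\vee Q$ denotes the spectral (Ando) max, i.e. the projection $I-\big((I-P)\wedge(I-Q)\big)$, where $\wedge$ is the orthogonal projection onto the intersection of ranges; equivalently the orthogonal projection onto the closed span of the ranges of $P$ and $Q$. Convention: $0^{-1}=+\infty$ and $(+\infty)^{-1}=0$. *)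

theory Defs
  imports "HOL-Analysis.Analysis" "HOL-Library.Extended_Real"
begin

text \<open>Operators on a (real) Hilbert space 'a are modelled as functions 'a \<Rightarrow> 'a.\<close>

definition is_orth_proj :: "('a::real_inner \<Rightarrow> 'a) \<Rightarrow> bool" where
  "is_orth_proj P \<longleftrightarrow> bounded_linear P \<and> P \<circ> P = P \<and>
     (\<forall>x y. inner (P x) y = inner x (P y))"

definition vstate :: "'a::real_inner \<Rightarrow> ('a \<Rightarrow> 'a) \<Rightarrow> real" where
  "vstate \<xi> T = inner (T \<xi>) \<xi>"

inductive_set star_alg :: "('a::real_inner \<Rightarrow> 'a) set \<Rightarrow> ('a \<Rightarrow> 'a) set"
  for S :: "('a \<Rightarrow> 'a) set" where
  gen: "T \<in> S \<Longrightarrow> T \<in> star_alg S"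
| add: "T \<in> star_alg S \<Longrightarrow> U \<in> star_alg S \<Longrightarrow> (\<lambda>x. T x + U x) \<in> star_alg S"
| scale: "T \<in> star_alg S \<Longrightarrow> (\<lambda>x. c *\<^sub>R T x) \<in> star_alg S"
| mult: "T \<in> star_alg S \<Longrightarrow> U \<in> star_alg S \<Longrightarrow> T \<circ> U \<in> star_alg S"
| adj: "T \<in> star_alg S \<Longrightarrow> (\<forall>x y. inner (T x) y = inner x (T' y)) \<Longrightarrow> T' \<in> star_alg S"

definition boolean_indep :: "'a::real_inner \<Rightarrow> ('a \<Rightarrow> 'a) set \<Rightarrow> ('a \<Rightarrow> 'a) set \<Rightarrow> bool" where
  "boolean_indep \<xi> A B \<longleftrightarrow>
    (\<forall>cs. cs \<noteq> [] \<and>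
       ((\<forall>i<length cs. cs ! i \<in> (if even i then A else B)) \<or>
        (\<forall>i<length cs. cs ! i \<in> (if even i then B else A))) \<longrightarrow>
       vstate \<xi> (foldr (\<circ>) cs id) = prod_list (map (vstate \<xi>) cs))"

definition boolean_indep_ops :: "'a::real_inner \<Rightarrow> ('a \<Rightarrow> 'a) set \<Rightarrow> ('a \<Rightarrow> 'a) set \<Rightarrow> bool" where
  "boolean_indep_ops \<xi> F G \<longleftrightarrow> boolean_indep \<xi> (star_alg F) (star_alg G)"

definition proj_sup :: "('a::real_inner \<Rightarrow> 'a) \<Rightarrow> ('a \<Rightarrow> 'a) \<Rightarrow> ('a \<Rightarrow> 'a)" where
  "proj_sup P Q = (THE R. is_orth_proj R \<and> range R = closure (span (range P \<union> range Q)))"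

definition einv :: "real \<Rightarrow> ereal" where
  "einv x = (if x = 0 then \<infinity> else ereal (1 / x))"

end

(* For p, q > 0 put s = 1/p + 1/q - 1.  Boolean independence gives P Q xi = phi(Q) P xi and
   Q P xi = phi(P) Q xi: the squared norm of the difference only involves the states of the
   words PQ and QPQ, which factorise.  Consequently x = s xi - P xi / p - Q xi / q is killed by
   P and Q, hence orthogonal to their ranges and killed by P \<or> Q, while w = P xi / p + Q xi / q
   is fixed by P \<or> Q.  From s xi = w + x we get s phi(P \<or> Q) = <w, xi> = s - 1, that is
   phi(P \<or> Q) = 1 - 1/s.  If p = 0 or q = 0 then xi lies in the range of P or of Q and
   phi(P \<or> Q) = 1.  That P \<or> Q exists at all is the projection theorem for closed subspaces of a
   real Hilbert space, obtained from minimizing sequences and the parallelogram law. *)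

theory Submission
  imports Defs
begin

lemma subspace_closure:
  fixes S :: "'a::real_normed_vector set"
  assumes "subspace S"
  shows "subspace (closure S)"
proof -
  have add: "(\<lambda>z. fst z + snd z) ` closure (S \<times> S) \<subseteq> closure S"
    by (rule image_closure_subset) (use assms in \<open>auto intro!: continuous_intros
        simp: subspace_def intro: closure_subset[THEN subsetD]\<close>)
  have scale: "(\<lambda>z. c *\<^sub>R z) ` closure S \<subseteq> closure S" for c
    by (rule image_closure_subset) (use assms in \<open>auto intro!: continuous_intros
        simp: subspace_def intro: closure_subset[THEN subsetD]\<close>)
  show ?thesis
    unfolding subspace_def
  proof (intro conjI ballI allI)
    show "0 \<in> closure S"
      using assms by (auto simp: subspace_def intro: closure_subset[THEN subsetD])
    show "x + y \<in> closure S" if "x \<in> closure S" "y \<in> closure S" for x y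
      using add that by (force simp: closure_Times)
    show "c *\<^sub>R x \<in> closure S" if "x \<in> closure S" for c x
      using scale that by blast
  qed
qed

lemma parallelogram_law:
  fixes u v :: "'a::real_inner"
  shows "(norm (u - v))\<^sup>2 + (norm (u + v))\<^sup>2 = 2 * (norm u)\<^sup>2 + 2 * (norm v)\<^sup>2"
  by (simp add: power2_norm_eq_inner inner_commute algebra_simps)

text \<open>Apply the parallelogram law to \<open>x - u\<close> and \<open>x - v\<close>: their half-sum is \<open>x\<close> minus
  the midpoint of \<open>u\<close> and \<open>v\<close>, which lies in \<open>S\<close>.\<close>
lemma norm_diff_sq_le_infdist_convex:
  fixes S :: "'a::real_inner set"
  assumes "convex S" and "u \<in> S" and "v \<in> S"
  shows "(norm (u - v))\<^sup>2 \<le> 2 * (dist x u)\<^sup>2 + 2 * (dist x v)\<^sup>2 - 4 * (infdist x S)\<^sup>2"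
proof -
  define m where "m = (1/2) *\<^sub>R u + (1/2) *\<^sub>R v"
  have "m \<in> S"
    unfolding m_def using assms by (intro convexD) auto
  then have "infdist x S \<le> norm (x - m)"
    by (simp add: infdist_le flip: dist_norm)
  then have "(infdist x S)\<^sup>2 \<le> (norm (x - m))\<^sup>2"
    by (rule power_mono) (rule infdist_nonneg)
  moreover have "(x - u) + (x - v) = 2 *\<^sub>R (x - m)"
    by (simp add: m_def algebra_simps scaleR_2)
  moreover have "(x - u) - (x - v) = -(u - v)"
    by simp
  ultimately show ?thesis
    using parallelogram_law[of "x - u" "x - v"]
    by (simp only: norm_minus_cancel norm_scaleR dist_norm) (simp add: power_mult_distrib)
qed

lemma infdist_minimizing_sequence:
  assumes "S \<noteq> {}"
  obtains f where "\<And>n. f n \<in> S"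
    and "\<And>n. (dist x (f n))\<^sup>2 < (infdist x S)\<^sup>2 + inverse (real (Suc n))"
proof -
  define d where "d = infdist x S"
  have "\<exists>y\<in>S. (dist x y)\<^sup>2 < d\<^sup>2 + inverse (real (Suc n))" for n
  proof -
    define t where "t = sqrt (d\<^sup>2 + inverse (real (Suc n)))"
    have "d \<ge> 0"
      unfolding d_def by (rule infdist_nonneg)
    then have "d < t"
      unfolding t_def using real_sqrt_less_mono[of "d\<^sup>2"] by simp
    then have "(INF y\<in>S. dist x y) < t"
      using infdist_notempty[OF assms] d_def by simp
    then obtain y where y: "y \<in> S" "dist x y < t"
      using assms by (subst (asm) cINF_less_iff) (auto intro!: bdd_belowI[where m=0])
    have "(dist x y)\<^sup>2 < t\<^sup>2"
      using y(2) by (intro power_strict_mono) auto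
    also have "t\<^sup>2 = d\<^sup>2 + inverse (real (Suc n))"
      unfolding t_def by simp
    finally show ?thesis
      using y(1) by blast
  qed
  then show ?thesis
    using that unfolding d_def by metis
qed

lemma minimizing_sequence_Cauchy_convex:
  fixes S :: "'a::real_inner set"
  assumes "convex S" and f_in: "\<And>n. f n \<in> S"
    and f_close: "\<And>n. (dist x (f n))\<^sup>2 < (infdist x S)\<^sup>2 + inverse (real (Suc n))"
  shows "Cauchy f"
proof (rule metric_CauchyI)
  fix e :: real
  assume "e > 0"
  then obtain N where N: "inverse (real (Suc N)) < e\<^sup>2 / 4"
    by (metis divide_pos_pos reals_Archimedean zero_less_numeral zero_less_power)
  have "dist (f m) (f n) < e" if "N \<le> m" "N \<le> n" for m n
  proof -
    have "inverse (real (Suc m)) \<le> inverse (real (Suc N))"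
      "inverse (real (Suc n)) \<le> inverse (real (Suc N))"
      using that by (simp_all add: le_imp_inverse_le)
    moreover have "(dist (f m) (f n))\<^sup>2
        \<le> 2 * (dist x (f m))\<^sup>2 + 2 * (dist x (f n))\<^sup>2 - 4 * (infdist x S)\<^sup>2"
      using norm_diff_sq_le_infdist_convex[OF assms(1) f_in f_in, of m n x]
      unfolding dist_norm .
    ultimately have "(dist (f m) (f n))\<^sup>2 < e\<^sup>2"
      using f_close[of m] f_close[of n] N by linarith
    then show ?thesis
      using \<open>e > 0\<close> by (simp add: power_less_imp_less_base)
  qed
  then show "\<exists>N. \<forall>m\<ge>N. \<forall>n\<ge>N. dist (f m) (f n) < e"
    by blast
qed

lemma closest_point_exists_complete:
  fixes S :: "'a::{real_inner,complete_space} set"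
  assumes "closed S" and "convex S" and "S \<noteq> {}"
  obtains m where "m \<in> S" and "\<And>y. y \<in> S \<Longrightarrow> dist x m \<le> dist x y"
proof -
  define d where "d = infdist x S"
  obtain f where f_in: "\<And>n. f n \<in> S"
    and f_close: "\<And>n. (dist x (f n))\<^sup>2 < d\<^sup>2 + inverse (real (Suc n))"
    using infdist_minimizing_sequence[OF assms(3)] unfolding d_def by metis
  then have "Cauchy f"
    unfolding d_def by (rule minimizing_sequence_Cauchy_convex[OF assms(2)])
  then obtain m where lim: "f \<longlonglongrightarrow> m"
    using convergent_eq_Cauchy convergent_def by blast
  have "m \<in> S"
    using closed_sequentially[OF assms(1)] f_in lim by blast
  have "(dist x m)\<^sup>2 \<le> d\<^sup>2 + 0"
  proof (rule LIMSEQ_le)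
    show "(\<lambda>n. (dist x (f n))\<^sup>2) \<longlonglongrightarrow> (dist x m)\<^sup>2"
      by (intro tendsto_intros lim)
    show "(\<lambda>n. d\<^sup>2 + inverse (real (Suc n))) \<longlonglongrightarrow> d\<^sup>2 + 0"
      by (intro tendsto_intros LIMSEQ_inverse_real_of_nat)
    show "\<exists>N. \<forall>n\<ge>N. (dist x (f n))\<^sup>2 \<le> d\<^sup>2 + inverse (real (Suc n))"
      using f_close less_imp_le by blast
  qed
  then have "(dist x m)\<^sup>2 \<le> d\<^sup>2"
    by simp
  then have "dist x m \<le> d"
    using infdist_nonneg unfolding d_def by (rule power2_le_imp_le)
  moreover have "d \<le> dist x y" if "y \<in> S" for y
    unfolding d_def using that by (rule infdist_le)
  ultimately show ?thesis
    using that[OF \<open>m \<in> S\<close>] by (meson order_trans)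
qed

lemma closest_point_subspace_orthogonal:
  fixes M :: "'a::real_inner set"
  assumes "subspace M" and "m \<in> M" and closest: "\<And>y. y \<in> M \<Longrightarrow> dist x m \<le> dist x y"
    and "y \<in> M"
  shows "inner (x - m) y = 0"
proof (cases "y = 0")
  case False
  define c where "c = inner (x - m) y"
  define s where "s = inner y y"
  have "s > 0"
    unfolding s_def using False by simp
  text \<open>Compare with the competitor \<open>m + (c/s) y\<close>: the squared distance drops by \<open>c\<^sup>2/s\<close>.\<close>
  define t where "t = c / s"
  have "m + t *\<^sub>R y \<in> M"
    using assms by (simp add: subspace_add subspace_scale)
  then have "norm (x - m) \<le> norm ((x - m) - t *\<^sub>R y)"
    using closest[of "m + t *\<^sub>R y"] by (simp add: dist_norm algebra_simps)
  then have "(norm (x - m))\<^sup>2 \<le> (norm ((x - m) - t *\<^sub>R y))\<^sup>2"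
    by (rule power_mono) simp
  also have "\<dots> = (norm (x - m))\<^sup>2 - 2 * t * c + t\<^sup>2 * s"
    unfolding power2_norm_eq_inner c_def s_def
    by (simp add: inner_diff_left inner_diff_right inner_commute power2_eq_square algebra_simps)
  also have "\<dots> = (norm (x - m))\<^sup>2 - c\<^sup>2 / s"
    using \<open>s > 0\<close> by (simp add: t_def power2_eq_square field_simps)
  finally have "c\<^sup>2 / s \<le> 0"
    by simp
  then have "c = 0"
    using \<open>s > 0\<close> by (simp add: divide_le_0_iff)
  then show ?thesis
    unfolding c_def .
qed simp

lemma orthogonal_decomposition_exists:
  fixes M :: "'a::{real_inner,complete_space} set"
  assumes "subspace M" and "closed M"
  obtains m where "m \<in> M" and "\<And>y. y \<in> M \<Longrightarrow> inner (x - m) y = 0"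
proof -
  have "convex M" "M \<noteq> {}"
    using assms(1) by (auto simp: subspace_imp_convex subspace_def)
  then obtain m where "m \<in> M" "\<And>y. y \<in> M \<Longrightarrow> dist x m \<le> dist x y"
    using closest_point_exists_complete[OF assms(2)] by metis
  then show ?thesis
    using that closest_point_subspace_orthogonal[OF assms(1)] by blast
qed

lemma orthogonal_residual_unique:
  fixes M :: "'a::real_inner set"
  assumes "subspace M" and "m \<in> M" and "m' \<in> M"
    and "\<And>y. y \<in> M \<Longrightarrow> inner (x - m) y = 0" and "\<And>y. y \<in> M \<Longrightarrow> inner (x - m') y = 0"
  shows "m = m'"
proof -
  have "m - m' \<in> M"
    using assms(1-3) by (rule subspace_diff)
  have "inner (m - m') (m - m') = inner (x - m') (m - m') - inner (x - m) (m - m')"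
    by (simp add: inner_diff_left)
  also have "\<dots> = 0"
    using assms(4,5)[OF \<open>m - m' \<in> M\<close>] by simp
  finally show ?thesis
    by simp
qed

lemma is_orth_projI_orthogonal_residual:
  fixes R :: "'a::real_inner \<Rightarrow> 'a"
  assumes M: "subspace M" and R_in: "\<And>x. R x \<in> M"
    and residual: "\<And>x y. y \<in> M \<Longrightarrow> inner (x - R x) y = 0"
  shows "is_orth_proj R" and "range R = M"
proof -
  have R_unique: "R x = m" if "m \<in> M" and "\<And>y. y \<in> M \<Longrightarrow> inner (x - m) y = 0" for x m
    using orthogonal_residual_unique[OF M R_in that(1) residual that(2)] .
  have R_fixes: "R m = m" if "m \<in> M" for m
    using R_unique[OF that] by simp
  have add: "R (x + y) = R x + R y" for x y
  proof (rule R_unique)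
    show "R x + R y \<in> M"
      using subspace_add[OF M R_in R_in] .
    show "inner (x + y - (R x + R y)) z = 0" if "z \<in> M" for z
    proof -
      have "x + y - (R x + R y) = (x - R x) + (y - R y)"
        by (simp add: algebra_simps)
      then show ?thesis
        by (simp only: inner_add_left residual[OF that] add_0_left)
    qed
  qed
  have scale: "R (c *\<^sub>R x) = c *\<^sub>R R x" for c x
  proof (rule R_unique)
    show "c *\<^sub>R R x \<in> M"
      using subspace_scale[OF M R_in] .
    show "inner (c *\<^sub>R x - c *\<^sub>R R x) z = 0" if "z \<in> M" for z
    proof -
      have "c *\<^sub>R x - c *\<^sub>R R x = c *\<^sub>R (x - R x)"
        by (simp add: algebra_simps)
      then show ?thesis
        by (simp only: inner_scaleR_left residual[OF that] mult_zero_right)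
    qed
  qed
  have norm_le: "norm (R x) \<le> norm x * 1" for x
  proof -
    have "orthogonal (R x) (x - R x)"
      using residual[of "R x" x, OF R_in] by (simp add: orthogonal_def inner_commute)
    from norm_add_Pythagorean[OF this]
    have "(norm (R x))\<^sup>2 \<le> (norm x)\<^sup>2"
      by simp
    then have "norm (R x) \<le> norm x"
      by (rule power2_le_imp_le) simp
    then show ?thesis
      by simp
  qed
  have self_adjoint: "inner (R x) y = inner x (R y)" for x y
    using residual[of "R y" x, OF R_in] residual[of "R x" y, OF R_in]
    by (simp add: inner_diff_left inner_diff_right inner_commute)
  have "R \<circ> R = R"
    by (rule ext) (simp add: R_fixes R_in)
  then show "is_orth_proj R"
    unfolding is_orth_proj_def using bounded_linear_intro[OF add scale norm_le] self_adjoint by blast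
  show "range R = M"
  proof
    show "range R \<subseteq> M"
      using R_in by auto
    show "M \<subseteq> range R"
      using R_fixes by (metis rangeI subsetI)
  qed
qed

lemma orth_proj_onto_exists:
  fixes M :: "'a::{real_inner,complete_space} set"
  assumes "subspace M" and "closed M"
  shows "\<exists>R. is_orth_proj R \<and> range R = M"
proof -
  have "\<forall>x. \<exists>m. m \<in> M \<and> (\<forall>y\<in>M. inner (x - m) y = 0)"
    using orthogonal_decomposition_exists[OF assms] by metis
  then obtain R where "\<forall>x. R x \<in> M \<and> (\<forall>y\<in>M. inner (x - R x) y = 0)"
    by metis
  then show ?thesis
    using is_orth_projI_orthogonal_residual[OF assms(1), of R] by blast
qed

lemma orth_proj_self_adjoint: "is_orth_proj P \<Longrightarrow> inner (P x) y = inner x (P y)"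
  unfolding is_orth_proj_def by blast

lemma orth_proj_idem: "is_orth_proj P \<Longrightarrow> P (P x) = P x"
  unfolding is_orth_proj_def by (metis comp_apply)

lemma orth_proj_linear: "is_orth_proj P \<Longrightarrow> linear P"
  unfolding is_orth_proj_def using bounded_linear.linear by blast

lemma orth_proj_fixes_range: "is_orth_proj P \<Longrightarrow> z \<in> range P \<Longrightarrow> P z = z"
  using orth_proj_idem by blast

lemma orth_proj_inner_image: "is_orth_proj P \<Longrightarrow> inner (P x) (P y) = inner (P x) y"
  by (metis orth_proj_self_adjoint orth_proj_idem)

lemma orth_proj_unique:
  fixes R S :: "'a::real_inner \<Rightarrow> 'a"
  assumes R: "is_orth_proj R" and S: "is_orth_proj S" and "range R = range S"
  shows "R = S"
proof
  fix x
  have RS: "R (S z) = S z" for z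
    using orth_proj_fixes_range[OF R] \<open>range R = range S\<close> by (metis rangeI)
  have SR: "S (R z) = R z" for z
    using orth_proj_fixes_range[OF S] \<open>range R = range S\<close> by (metis rangeI)
  have "inner (R x) y = inner (S x) y" for y
  proof -
    have "inner (R x) y = inner x (S (R y))"
      by (simp add: SR orth_proj_self_adjoint[OF R])
    also have "\<dots> = inner (R (S x)) y"
      by (simp add: orth_proj_self_adjoint[OF R] orth_proj_self_adjoint[OF S])
    finally show ?thesis
      by (simp add: RS)
  qed
  then have "inner (R x - S x) (R x - S x) = 0"
    by (simp add: inner_diff_left)
  then show "R x = S x"
    by simp
qed

lemma proj_sup:
  fixes P Q :: "'a::{real_inner,complete_space} \<Rightarrow> 'a"
  shows "is_orth_proj (proj_sup P Q)"
    and "range (proj_sup P Q) = closure (span (range P \<union> range Q))"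
proof -
  let ?M = "closure (span (range P \<union> range Q))"
  obtain R where "is_orth_proj R" "range R = ?M"
    using orth_proj_onto_exists[OF subspace_closure[OF subspace_span] closed_closure] by blast
  then have "\<exists>!R. is_orth_proj R \<and> range R = ?M"
    by (intro ex1I[of _ R]) (simp, metis orth_proj_unique)
  from theI'[OF this] show "is_orth_proj (proj_sup P Q)" "range (proj_sup P Q) = ?M"
    unfolding proj_sup_def by auto
qed

lemma proj_sup_fixes_span:
  fixes P Q :: "'a::{real_inner,complete_space} \<Rightarrow> 'a"
  assumes "z \<in> span (range P \<union> range Q)"
  shows "proj_sup P Q z = z"
  using assms proj_sup closure_subset by (metis orth_proj_fixes_range subsetD)

lemma orth_proj_eq_0_if_orthogonal_range:
  assumes R: "is_orth_proj R" and orth: "\<And>z. z \<in> range R \<Longrightarrow> inner x z = 0"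
  shows "R x = 0"
proof -
  have "inner (R x) (R x) = inner x (R (R x))"
    by (rule orth_proj_self_adjoint[OF R])
  also have "\<dots> = 0"
    using orth by simp
  finally show ?thesis
    by simp
qed

lemma proj_sup_eq_0:
  fixes P Q :: "'a::{real_inner,complete_space} \<Rightarrow> 'a"
  assumes P: "is_orth_proj P" and Q: "is_orth_proj Q" and "P x = 0" and "Q x = 0"
  shows "proj_sup P Q x = 0"
proof (rule orth_proj_eq_0_if_orthogonal_range[OF proj_sup(1)])
  have "range P \<union> range Q \<subseteq> {z. inner x z = 0}"
    using \<open>P x = 0\<close> \<open>Q x = 0\<close> orth_proj_self_adjoint[OF P, of x] orth_proj_self_adjoint[OF Q, of x]
    by auto
  then have "closure (span (range P \<union> range Q)) \<subseteq> {z. inner x z = 0}"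
    by (intro closure_minimal span_minimal subspace_hyperplane closed_hyperplane)
  then show "inner x z = 0" if "z \<in> range (proj_sup P Q)" for z
    using that proj_sup(2) by blast
qed

lemma orth_proj_fixes_if_vstate_eq_1:
  assumes P: "is_orth_proj P" and "norm \<xi> = 1" and "vstate \<xi> P = 1"
  shows "P \<xi> = \<xi>"
proof -
  have "inner (P \<xi> - \<xi>) (P \<xi> - \<xi>) = inner (P \<xi>) (P \<xi>) - 2 * inner (P \<xi>) \<xi> + inner \<xi> \<xi>"
    by (simp add: inner_diff_left inner_diff_right inner_commute[of \<xi> "P \<xi>"])
  also have "\<dots> = 0"
    using assms orth_proj_inner_image[OF P, of \<xi> \<xi>] by (simp add: vstate_def norm_eq_1)
  finally show ?thesis
    by simp
qed

lemma boolean_indep_ops_commute: "boolean_indep_ops \<xi> F G \<Longrightarrow> boolean_indep_ops \<xi> G F"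
  unfolding boolean_indep_ops_def boolean_indep_def by blast

lemma boolean_indep_ops_alternating_words:
  fixes \<xi> :: "'a::real_inner"
  assumes "boolean_indep_ops \<xi> {P} {Q}"
  shows "inner (P (Q \<xi>)) \<xi> = vstate \<xi> P * vstate \<xi> Q"
    and "inner (Q (P (Q \<xi>))) \<xi> = vstate \<xi> Q * vstate \<xi> P * vstate \<xi> Q"
proof -
  have indep: "boolean_indep \<xi> (star_alg {P}) (star_alg {Q})"
    using assms unfolding boolean_indep_ops_def .
  have "P \<in> star_alg {P}" "Q \<in> star_alg {Q}"
    by (auto intro: star_alg.gen)
  then have "vstate \<xi> (foldr (\<circ>) [P, Q] id) = prod_list (map (vstate \<xi>) [P, Q])"
    and "vstate \<xi> (foldr (\<circ>) [Q, P, Q] id) = prod_list (map (vstate \<xi>) [Q, P, Q])"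
    using indep unfolding boolean_indep_def
    by (fastforce elim!: allE[of _ "[P, Q]"] simp: less_Suc_eq,
        fastforce elim!: allE[of _ "[Q, P, Q]"] simp: less_Suc_eq numeral_eq_Suc)
  then show "inner (P (Q \<xi>)) \<xi> = vstate \<xi> P * vstate \<xi> Q"
    and "inner (Q (P (Q \<xi>))) \<xi> = vstate \<xi> Q * vstate \<xi> P * vstate \<xi> Q"
    by (simp_all add: vstate_def)
qed

lemma boolean_indep_proj_compose:
  fixes \<xi> :: "'a::real_inner"
  assumes P: "is_orth_proj P" and Q: "is_orth_proj Q" and indep: "boolean_indep_ops \<xi> {P} {Q}"
  shows "P (Q \<xi>) = vstate \<xi> Q *\<^sub>R P \<xi>"
proof -
  define a where "a = vstate \<xi> P"
  define b where "b = vstate \<xi> Q"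
  have "inner (P (Q \<xi>)) (P (Q \<xi>)) = inner (Q (P (Q \<xi>))) \<xi>"
    by (simp add: orth_proj_inner_image[OF P] orth_proj_self_adjoint[OF Q])
  also have "\<dots> = b * a * b"
    using boolean_indep_ops_alternating_words(2)[OF indep] by (simp add: a_def b_def)
  finally have PQPQ: "inner (P (Q \<xi>)) (P (Q \<xi>)) = b * a * b" .
  have PQP: "inner (P (Q \<xi>)) (P \<xi>) = a * b"
    using orth_proj_inner_image[OF P, of "Q \<xi>" \<xi>] boolean_indep_ops_alternating_words(1)[OF indep]
    by (simp add: a_def b_def)
  have PP: "inner (P \<xi>) (P \<xi>) = a"
    using orth_proj_inner_image[OF P, of \<xi> \<xi>] by (simp add: a_def vstate_def)
  have "inner (P (Q \<xi>) - b *\<^sub>R P \<xi>) (P (Q \<xi>) - b *\<^sub>R P \<xi>)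
      = inner (P (Q \<xi>)) (P (Q \<xi>)) - 2 * b * inner (P (Q \<xi>)) (P \<xi>) + b * b * inner (P \<xi>) (P \<xi>)"
    by (simp add: inner_diff_left inner_diff_right inner_commute[of "P \<xi>" "P (Q \<xi>)"] algebra_simps)
  also have "\<dots> = 0"
    using PQPQ PQP PP by (simp add: algebra_simps)
  finally show ?thesis
    by (simp add: b_def)
qed

text \<open>The solution \<open>r\<close> of \<open>r\<^sup>-\<^sup>1 - 1 = (p\<^sup>-\<^sup>1 - 1) + (q\<^sup>-\<^sup>1 - 1)\<close>. For \<open>p = q = 0\<close> the denominator
  vanishes, and division by zero yields the correct value \<open>0\<close>.\<close>
definition boolean_sup_param :: "real \<Rightarrow> real \<Rightarrow> real" where
  "boolean_sup_param p q = p * q / (p + q - p * q)"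

lemma boolean_sup_param_eq_0: "p = 0 \<or> q = 0 \<Longrightarrow> boolean_sup_param p q = 0"
  unfolding boolean_sup_param_def by auto

lemma inverse_boolean_sup_param:
  assumes "p \<noteq> 0" and "q \<noteq> 0"
  shows "inverse (boolean_sup_param p q) = inverse p + inverse q - 1"
  using assms unfolding boolean_sup_param_def by (simp add: field_simps)

lemma inverse_add_inverse_minus_one_ge_1:
  fixes p q :: real
  assumes "p \<in> {0<..1}" and "q \<in> {0<..1}"
  shows "inverse p + inverse q - 1 \<ge> 1"
proof -
  have "inverse p \<ge> 1" and "inverse q \<ge> 1"
    using assms by (auto simp: one_le_inverse_iff)
  then show ?thesis
    by simp
qed

lemma boolean_sup_param_bounds:
  assumes "p \<in> {0..1}" and "q \<in> {0..1}"
  shows "boolean_sup_param p q \<in> {0..1}"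
proof (cases "p = 0 \<or> q = 0")
  case False
  then have "inverse (boolean_sup_param p q) \<ge> 1"
    using assms inverse_boolean_sup_param inverse_add_inverse_minus_one_ge_1 by auto
  then show ?thesis
    by (auto simp: one_le_inverse_iff)
qed (simp add: boolean_sup_param_eq_0)

lemma einv_minus_one: "einv x - 1 = (if x = 0 then \<infinity> else ereal (inverse x - 1))"
  by (simp add: einv_def one_ereal_def divide_inverse)

lemma einv_equation_iff_boolean_sup_param:
  assumes "p \<in> {0..1}" and "q \<in> {0..1}" and "r \<in> {0..1}"
  shows "einv r - 1 = (einv p - 1) + (einv q - 1) \<longleftrightarrow> r = boolean_sup_param p q"
proof (cases "p = 0 \<or> q = 0")
  case True
  then have "(einv p - 1) + (einv q - 1) = \<infinity>"
    using assms by (auto simp: einv_minus_one)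
  then show ?thesis
    using True by (auto simp: einv_minus_one boolean_sup_param_eq_0)
next
  case False
  then have "(einv p - 1) + (einv q - 1) = ereal (inverse p + inverse q - 1 - 1)"
    by (simp add: einv_minus_one)
  then have "einv r - 1 = (einv p - 1) + (einv q - 1) \<longleftrightarrow>
      r \<noteq> 0 \<and> inverse r = inverse (boolean_sup_param p q)"
    using False by (auto simp: einv_minus_one inverse_boolean_sup_param)
  also have "\<dots> \<longleftrightarrow> r = boolean_sup_param p q"
  proof -
    have "boolean_sup_param p q \<noteq> 0"
      using False assms(1,2) inverse_boolean_sup_param[of p q]
        inverse_add_inverse_minus_one_ge_1[of p q] by auto
    then show ?thesis
      by auto
  qed
  finally show ?thesis .
qed

lemma vstate_proj_sup_boolean_indep:
  fixes \<xi> :: "'a::{real_inner, complete_space}"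
  assumes "norm \<xi> = 1" and P: "is_orth_proj P" and Q: "is_orth_proj Q"
    and indep: "boolean_indep_ops \<xi> {P} {Q}"
    and "p \<in> {0..1}" and "q \<in> {0..1}"
    and "vstate \<xi> P = 1 - p" and "vstate \<xi> Q = 1 - q"
  shows "vstate \<xi> (proj_sup P Q) = 1 - boolean_sup_param p q"
proof (cases "p = 0 \<or> q = 0")
  case True
  then have "P \<xi> = \<xi> \<or> Q \<xi> = \<xi>"
    using orth_proj_fixes_if_vstate_eq_1[OF P] orth_proj_fixes_if_vstate_eq_1[OF Q] assms by auto
  then have "\<xi> \<in> span (range P \<union> range Q)"
    by (metis UnI1 UnI2 rangeI span_base)
  then show ?thesis
    using True \<open>norm \<xi> = 1\<close>
    by (simp add: proj_sup_fixes_span vstate_def boolean_sup_param_eq_0 norm_eq_1)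
next
  case False
  define R where "R = proj_sup P Q"
  define s where "s = inverse p + inverse q - 1"
  define w where "w = inverse p *\<^sub>R P \<xi> + inverse q *\<^sub>R Q \<xi>"
  define x where "x = s *\<^sub>R \<xi> - w"
  have "s \<ge> 1"
    using False assms(5,6) inverse_add_inverse_minus_one_ge_1[of p q] by (auto simp: s_def)
  note linear_simps = linear_diff[OF orth_proj_linear] linear_add[OF orth_proj_linear]
    linear_scale[OF orth_proj_linear] orth_proj_idem
  have PQ: "P (Q \<xi>) = (1 - q) *\<^sub>R P \<xi>"
    using boolean_indep_proj_compose[OF P Q indep] \<open>vstate \<xi> Q = 1 - q\<close> by simp
  have QP: "Q (P \<xi>) = (1 - p) *\<^sub>R Q \<xi>"
    using boolean_indep_proj_compose[OF Q P boolean_indep_ops_commute[OF indep]]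
      \<open>vstate \<xi> P = 1 - p\<close> by simp
  have "P x = (s - inverse p - inverse q * (1 - q)) *\<^sub>R P \<xi>"
    by (simp add: x_def w_def linear_simps[OF P] PQ algebra_simps)
  also have "\<dots> = 0"
    using False by (simp add: s_def field_simps)
  finally have "P x = 0" .
  have "Q x = (s - inverse q - inverse p * (1 - p)) *\<^sub>R Q \<xi>"
    by (simp add: x_def w_def linear_simps[OF Q] QP algebra_simps)
  also have "\<dots> = 0"
    using False by (simp add: s_def field_simps)
  finally have "Q x = 0" .
  have "R x = 0"
    unfolding R_def using P Q \<open>P x = 0\<close> \<open>Q x = 0\<close> by (rule proj_sup_eq_0)
  have "R w = w"
    unfolding R_def w_def by (intro proj_sup_fixes_span span_add span_scale span_base) auto
  have "s *\<^sub>R R \<xi> = R (s *\<^sub>R \<xi>)"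
    by (simp add: R_def linear_simps(3)[OF proj_sup(1)])
  also have "\<dots> = R w + R x"
    by (simp add: x_def R_def linear_simps(2)[OF proj_sup(1), symmetric])
  also have "\<dots> = w"
    using \<open>R x = 0\<close> \<open>R w = w\<close> by simp
  finally have "s *\<^sub>R R \<xi> = w" .
  have "s * vstate \<xi> R = inner (s *\<^sub>R R \<xi>) \<xi>"
    by (simp add: vstate_def)
  also have "\<dots> = inner w \<xi>"
    by (simp add: \<open>s *\<^sub>R R \<xi> = w\<close>)
  also have "\<dots> = inverse p * (1 - p) + inverse q * (1 - q)"
    using \<open>vstate \<xi> P = 1 - p\<close> \<open>vstate \<xi> Q = 1 - q\<close>
    by (simp add: w_def vstate_def inner_add_left)
  also have "\<dots> = s - 1"
    using False by (simp add: s_def field_simps)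
  finally have "vstate \<xi> R = 1 - inverse s"
    using \<open>s \<ge> 1\<close> by (simp add: field_simps)
  moreover have "boolean_sup_param p q = inverse s"
    using arg_cong[OF inverse_boolean_sup_param[of p q], of inverse] False by (simp add: s_def)
  ultimately show ?thesis
    unfolding R_def by simp
qed

theorem lemma3p1:
  fixes \<xi> :: "'a::{real_inner, complete_space}"
    and P Q :: "'a \<Rightarrow> 'a" and p q :: real
  assumes "norm \<xi> = 1"
    and "is_orth_proj P" and "is_orth_proj Q"
    and "boolean_indep_ops \<xi> {P} {Q}"
    and "p \<in> {0..1}" and "q \<in> {0..1}"
    and "vstate \<xi> P = 1 - p" and "vstate \<xi> Q = 1 - q"
  shows "(\<exists>r\<in>{0..1}. einv r - 1 = (einv p - 1) + (einv q - 1)) \<and>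
         (\<forall>r\<in>{0..1}. einv r - 1 = (einv p - 1) + (einv q - 1) \<longrightarrow>
             vstate \<xi> (proj_sup P Q) = 1 - r)"
proof (intro conjI ballI impI)
  show "\<exists>r\<in>{0..1}. einv r - 1 = (einv p - 1) + (einv q - 1)"
    using boolean_sup_param_bounds[OF assms(5,6)]
      einv_equation_iff_boolean_sup_param[OF assms(5,6)] by blast
next
  fix r :: real
  assume "r \<in> {0..1}" and "einv r - 1 = (einv p - 1) + (einv q - 1)"
  then have "r = boolean_sup_param p q"
    using einv_equation_iff_boolean_sup_param[OF assms(5,6)] by blast
  then show "vstate \<xi> (proj_sup P Q) = 1 - r"
    using vstate_proj_sup_boolean_indep[OF assms] by simp
qed

end
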